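(* Let $\mathbf{Q}$, $\mathbf{A}$, $\mathbf{I}$ be a closed rectangle, a closed annulus and a closed interval in $\mathbb{C}$, with interiors $Q$, $A$ and $I$ ($I$ being $\mathbf{I}$ minus its endpoints). Then $\mathrm{Poly}_d^{mt}(\mathbf{Q})$, $\mathrm{Poly}_d^{mt}(\mathbf{A})$ and $\mathrm{Poly}_d^{mt}(\mathbf{I})$ are compactifications of $\mathrm{Poly}_d^{mt}(Q)$, $\mathrm{Poly}_d^{mt}(A)$ and $\mathrm{Poly}_d^{mt}(I)$, respectively.
   Context: $d\ge2$. $\mathrm{Poly}_d^{mt}$ is the space of monic degree-$d$ complex polynomials modulo precomposition with translations, topologized via coefficients of the centered representative; $\mathrm{Poly}_d^{mt}(X)$ is the subspace of classes whose critical values (values of $p$ at roots of $p'$) all lie in $X\subseteq\mathbb{C}$. A compactification of a space $Y$ is a compact space containing $Y$ as a dense subspace. *)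

theory Defs
  imports "HOL-Analysis.Analysis" "HOL-Computational_Algebra.Polynomial"
begin

text \<open>Centered representative of a class in Poly_d^mt: monic, degree d, vanishing
  coefficient of z^(d-1) (each class mod translation has exactly one such representative).\<close>
definition centered_monic :: "nat \<Rightarrow> complex poly \<Rightarrow> bool" where
  "centered_monic d p \<longleftrightarrow> degree p = d \<and> lead_coeff p = 1 \<and> coeff p (d - 1) = 0"

definition critical_values :: "complex poly \<Rightarrow> complex set" where
  "critical_values p = {poly p z | z. poly (pderiv p) z = 0}"

text \<open>Poly_d^mt(X), embedded via coefficients of the centered representative into
  nat => complex (product topology).\<close>
definition Poly_mt :: "nat \<Rightarrow> complex set \<Rightarrow> (nat \<Rightarrow> complex) set" where
  "Poly_mt d X = {(\<lambda>i. coeff p i) | p. centered_monic d p \<and> critical_values p \<subseteq> X}"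

definition is_compactification_of :: "'a::topological_space set \<Rightarrow> 'a set \<Rightarrow> bool" where
  "is_compactification_of K Y \<longleftrightarrow> compact K \<and> Y \<subseteq> K \<and> K \<subseteq> closure Y"

definition closed_rectangle :: "complex set \<Rightarrow> bool" where
  "closed_rectangle S \<longleftrightarrow> (\<exists>w u a b. norm u = 1 \<and> a > 0 \<and> b > 0 \<and>
     S = {w + u * (complex_of_real x + \<i> * complex_of_real y) | x y. 0 \<le> x \<and> x \<le> a \<and> 0 \<le> y \<and> y \<le> b})"

definition closed_annulus :: "complex set \<Rightarrow> bool" where
  "closed_annulus S \<longleftrightarrow> (\<exists>z0 r R. 0 < r \<and> r < R \<and> S = cball z0 R - ball z0 r)"

end

theory Submission
  imports Defs "HOL-Computational_Algebra.Fundamental_Theorem_Algebra"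
begin

text \<open>
  The set of centered monic polynomials whose critical values lie in a bounded set
  has bounded critical points, hence bounded coefficients: otherwise rescaling by the largest
  critical point produces, in the limit, a centered polynomial all of whose critical values
  are \<open>0\<close> but which has a critical point on the unit circle, whereas such a polynomial is
  \<open>z ^ d\<close>. Closedness holds because critical values depend continuously on the coefficients.

  For the rectangle and the segment, which are star-shaped about a point \<open>m\<close> of the
  (relative) interior, the polynomial \<open>s\<^sup>-\<^sup>d p (s z) + (1 - s\<^sup>-\<^sup>d) m\<close> with \<open>s > 1\<close> has
  critical values contracted towards \<open>m\<close> into the interior, and tends to \<open>p\<close> as \<open>s \<rightarrow> 1\<close>.
  For the annulus we move each critical value \<open>v\<close> in an inward direction \<open>W v\<close>: if \<open>h\<close>
  interpolates \<open>W (p c)\<close> at the critical points \<open>c\<close> (so \<open>deg h < d - 1\<close> and \<open>p + t h\<close> stays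
  centered and monic), the critical values of \<open>p + t h\<close> are \<open>v + t W v + o(t)\<close>.
\<close>

section \<open>Roots and coefficients of complex polynomials\<close>

lemma poly_prod_list_linear: "poly (\<Prod>x\<leftarrow>xs. [:-x, 1:]) z = (\<Prod>x\<leftarrow>xs. z - x)"
  for z :: "'a::comm_ring_1"
  by (induction xs) (auto simp: algebra_simps)

lemma norm_prod_list: "norm (\<Prod>x\<leftarrow>xs. f x) = (\<Prod>x\<leftarrow>xs. norm (f x))"
  for f :: "'a \<Rightarrow> 'b::real_normed_div_algebra"
  by (induction xs) (auto simp: norm_mult)

lemma prod_list_le_power_mult_prod_list:
  fixes f g :: "'a \<Rightarrow> 'b::linordered_semidom"
  assumes "\<And>x. x \<in> set xs \<Longrightarrow> 0 \<le> f x \<and> f x \<le> k * g x"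
  shows "(\<Prod>x\<leftarrow>xs. f x) \<le> k ^ length xs * (\<Prod>x\<leftarrow>xs. g x)"
  using assms
proof (induction xs)
  case (Cons a xs)
  have "0 \<le> (\<Prod>x\<leftarrow>xs. f x)" using Cons.prems by (intro prod_list_nonneg) auto
  then have "f a * (\<Prod>x\<leftarrow>xs. f x) \<le> (k * g a) * (k ^ length xs * (\<Prod>x\<leftarrow>xs. g x))"
    using Cons by (intro mult_mono) (auto intro: order_trans)
  then show ?case by (simp add: algebra_simps)
qed simp

lemma complex_poly_decompose_list:
  fixes P :: "complex poly"
  assumes "P \<noteq> 0"
  obtains xs where "mset xs = proots P" "length xs = degree P" "set xs = {z. poly P z = 0}"
    "P = smult (lead_coeff P) (\<Prod>x\<leftarrow>xs. [:-x, 1:])"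
proof -
  obtain xs where xs: "mset xs = proots P" using ex_mset by blast
  have "P = smult (lead_coeff P) (\<Prod>x\<in>#proots P. [:-x, 1:])"
    by (rule complex_poly_decompose_multiset [symmetric])
  also have "(\<Prod>x\<in>#proots P. [:-x, 1:]) = (\<Prod>x\<leftarrow>xs. [:-x, 1:])"
    by (subst prod_mset_prod_list [symmetric]) (simp add: xs)
  finally have "P = smult (lead_coeff P) (\<Prod>x\<leftarrow>xs. [:-x, 1:])" .
  moreover have "length xs = degree P"
    using xs size_proots_complex[of P] by (metis size_mset)
  moreover have "set xs = {z. poly P z = 0}"
    using xs assms by (metis set_count_proots set_mset_mset)
  ultimately show ?thesis using that xs by blast
qed

lemma norm_poly_eq_prod_list:
  fixes z :: complex
  assumes "P = smult a (\<Prod>x\<leftarrow>xs. [:-x, 1:])"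
  shows "norm (poly P z) = norm a * (\<Prod>x\<leftarrow>xs. norm (z - x))"
  using assms by (simp add: poly_prod_list_linear norm_mult norm_prod_list)

lemma exists_root_norm_power_le:
  fixes P :: "complex poly"
  assumes "degree P \<ge> 1"
  obtains c where "poly P c = 0" "norm (lead_coeff P) * norm (z - c) ^ degree P \<le> norm (poly P z)"
proof -
  have "P \<noteq> 0" using assms by auto
  then obtain xs where xs: "length xs = degree P" "set xs = {z. poly P z = 0}"
    "P = smult (lead_coeff P) (\<Prod>x\<leftarrow>xs. [:-x, 1:])" by (rule complex_poly_decompose_list)
  have "xs \<noteq> []" using xs assms by auto
  define c where "c = arg_min_list (\<lambda>x. norm (z - x)) xs"
  have c: "c \<in> set xs" using \<open>xs \<noteq> []\<close> by (simp add: c_def arg_min_list_in)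
  have "norm (z - c) = Min ((\<lambda>x. norm (z - x)) ` set xs)"
    using \<open>xs \<noteq> []\<close> unfolding c_def by (rule f_arg_min_list_f)
  then have "norm (z - c) \<le> norm (z - x)" if "x \<in> set xs" for x
    using that by simp
  then have "(\<Prod>x\<leftarrow>xs. norm (z - c)) \<le> 1 ^ length xs * (\<Prod>x\<leftarrow>xs. norm (z - x))"
    by (intro prod_list_le_power_mult_prod_list) auto
  then have "norm (z - c) ^ degree P \<le> (\<Prod>x\<leftarrow>xs. norm (z - x))"
    using xs(1) by (simp add: map_replicate_const)
  then show ?thesis
    using that c xs by (simp add: norm_poly_eq_prod_list[OF xs(3)] mult_left_mono)
qed

lemma norm_poly_le:
  fixes P :: "complex poly"
  assumes "norm z \<le> r"
  shows "norm (poly P z) \<le> (\<Sum>i\<le>degree P. norm (coeff P i) * r ^ i)"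
proof -
  have "norm (poly P z) \<le> (\<Sum>i\<le>degree P. norm (coeff P i * z ^ i))"
    unfolding poly_altdef by (rule norm_sum)
  also have "\<dots> \<le> (\<Sum>i\<le>degree P. norm (coeff P i) * r ^ i)"
    by (intro sum_mono) (simp add: norm_mult norm_power assms mult_left_mono power_mono)
  finally show ?thesis .
qed

lemma root_norm_le_Cauchy_bound:
  fixes P :: "complex poly"
  assumes "degree P \<ge> 1" "poly P z = 0"
  shows "norm z \<le> max 1 ((\<Sum>i<degree P. norm (coeff P i)) / norm (lead_coeff P))"
proof (rule ccontr)
  define n where "n = degree P"
  define A where "A = (\<Sum>i<n. norm (coeff P i))"
  assume "\<not> ?thesis"
  then have z1: "norm z > 1" and zA: "norm z > A / norm (lead_coeff P)"
    by (auto simp: A_def n_def)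
  have "poly P z = (\<Sum>i<n. coeff P i * z ^ i) + lead_coeff P * z ^ n"
    unfolding poly_altdef n_def by (simp add: lessThan_Suc_atMost[symmetric])
  then have "norm (lead_coeff P) * norm z ^ n = norm (\<Sum>i<n. coeff P i * z ^ i)"
    using assms(2) by (metis add_eq_0_iff norm_minus_cancel norm_mult norm_power add.commute)
  also have "\<dots> \<le> (\<Sum>i<n. norm (coeff P i * z ^ i))" by (rule norm_sum)
  also have "\<dots> \<le> (\<Sum>i<n. norm (coeff P i) * norm z ^ (n - 1))"
    using z1 by (intro sum_mono) (auto simp: norm_mult norm_power intro!: mult_left_mono power_increasing)
  also have "\<dots> = A * norm z ^ (n - 1)" by (simp add: A_def sum_distrib_right)
  finally have "norm (lead_coeff P) * norm z * norm z ^ (n - 1) \<le> A * norm z ^ (n - 1)"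
    using assms(1) by (simp add: n_def power_eq_if[of _ "degree P"] mult.assoc split: if_splits)
  moreover have "norm z ^ (n - 1) > 0" using z1 by (intro zero_less_power) linarith
  ultimately have "norm (lead_coeff P) * norm z \<le> A"
    by (simp add: mult_le_cancel_right)
  moreover have "lead_coeff P \<noteq> 0" using assms(1) by auto
  ultimately show False using zA by (simp add: field_simps)
qed

lemma poly_altdef_le:
  fixes p :: "'a::{comm_semiring_0,semiring_1} poly"
  assumes "degree p \<le> n"
  shows "poly p z = (\<Sum>i\<le>n. coeff p i * z ^ i)"
proof -
  have "(\<Sum>i\<le>n. coeff p i * z ^ i) = (\<Sum>i\<le>degree p. coeff p i * z ^ i)"
    using assms by (intro sum.mono_neutral_right) (auto simp: coeff_eq_0)
  then show ?thesis by (simp add: poly_altdef)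
qed

lemma tendsto_poly_coeffwise:
  fixes p :: "'b \<Rightarrow> complex poly"
  assumes "\<And>i. ((\<lambda>k. coeff (p k) i) \<longlongrightarrow> coeff q i) F" "\<And>k. degree (p k) \<le> n" "degree q \<le> n"
    and "(z \<longlongrightarrow> z0) F"
  shows "((\<lambda>k. poly (p k) (z k)) \<longlongrightarrow> poly q z0) F"
  by (simp add: poly_altdef_le[OF assms(2)] poly_altdef_le[OF assms(3)]) (intro tendsto_intros assms)

lemma tendsto_coeff_pderiv:
  fixes p :: "'b \<Rightarrow> complex poly"
  assumes "\<And>i. ((\<lambda>k. coeff (p k) i) \<longlongrightarrow> coeff q i) F"
  shows "((\<lambda>k. coeff (pderiv (p k)) i) \<longlongrightarrow> coeff (pderiv q) i) F"
  by (simp add: coeff_pderiv) (intro tendsto_intros assms)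

lemma tendsto_fun_iff: "(f \<longlongrightarrow> l) F \<longleftrightarrow> (\<forall>i. ((\<lambda>x. f x i) \<longlongrightarrow> l i) F)"
  for f :: "'b \<Rightarrow> 'a \<Rightarrow> 'c::topological_space"
  using limitin_componentwise[of "\<lambda>_. euclidean" UNIV f l F]
  by (simp add: euclidean_product_topology)

lemma coeff_linear_mult: "coeff ([:-a, 1:] * Q) i = - a * coeff Q i + (case i of 0 \<Rightarrow> 0 | Suc j \<Rightarrow> coeff Q j)"
  for a :: "'a::comm_ring_1"
  by (simp add: mult_pCons_left coeff_pCons split: nat.splits)

lemma norm_coeff_prod_list_linear_le:
  fixes xs :: "complex list"
  assumes "\<And>x. x \<in> set xs \<Longrightarrow> norm x \<le> r" "r \<ge> 0"
  shows "norm (coeff (\<Prod>x\<leftarrow>xs. [:-x, 1:]) i) \<le> (1 + r) ^ length xs"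
  using assms(1)
proof (induction xs arbitrary: i)
  case Nil then show ?case by (cases i) auto
next
  case (Cons a xs)
  define Q where "Q = (\<Prod>x\<leftarrow>xs. [:-x, 1:])"
  have IH: "norm (coeff Q j) \<le> (1 + r) ^ length xs" for j using Cons by (auto simp: Q_def)
  have "norm (coeff ([:-a, 1:] * Q) i) \<le> norm a * norm (coeff Q i) + norm (case i of 0 \<Rightarrow> 0 | Suc j \<Rightarrow> coeff Q j)"
    unfolding coeff_linear_mult by (metis norm_minus_cancel norm_mult norm_triangle_ineq mult_minus_left)
  also have "\<dots> \<le> r * (1 + r) ^ length xs + (1 + r) ^ length xs"
    using Cons.prems assms(2) IH by (intro add_mono mult_mono) (auto split: nat.splits)
  also have "\<dots> = (1 + r) ^ length (a # xs)" by (simp add: algebra_simps)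
  finally show ?case by (simp add: Q_def)
qed

lemma degree_prod_list_linear: "degree (\<Prod>x\<leftarrow>xs. [:-x, 1:]) = length xs"
  and lead_coeff_prod_list_linear: "lead_coeff (\<Prod>x\<leftarrow>xs. [:-x, 1:]) = 1"
  for xs :: "'a::idom list"
proof (induction xs)
  case (Cons a xs)
  then have "(\<Prod>x\<leftarrow>xs. [:-x, 1:]) \<noteq> 0" by auto
  with Cons show "degree (\<Prod>x\<leftarrow>a # xs. [:-x, 1:]) = length (a # xs)"
    by (simp del: mult_pCons_left add: degree_mult_eq)
  with Cons show "lead_coeff (\<Prod>x\<leftarrow>a # xs. [:-x, 1:]) = 1"
    by (simp del: mult_pCons_left add: coeff_linear_mult coeff_eq_0)
qed simp_all

lemma coeff_prod_list_linear_pred: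
  fixes xs :: "'a::idom list"
  assumes "xs \<noteq> []"
  shows "coeff (\<Prod>x\<leftarrow>xs. [:-x, 1:]) (length xs - 1) = - sum_list xs"
  using assms
proof (induction xs)
  case (Cons a xs)
  have top: "coeff (\<Prod>x\<leftarrow>xs. [:-x, 1:]) (length xs) = 1"
    using lead_coeff_prod_list_linear[of xs] by (simp add: degree_prod_list_linear)
  show ?case
  proof (cases xs)
    case (Cons b ys)
    then show ?thesis using Cons.IH top by (simp add: coeff_linear_mult)
  qed simp
qed simp

section \<open>Centered monic polynomials and their critical values\<close>

lemma critical_valuesI: "poly (pderiv p) z = 0 \<Longrightarrow> poly p z \<in> critical_values p"
  by (auto simp: critical_values_def)

lemma critical_values_subset_iff:
  "critical_values p \<subseteq> X \<longleftrightarrow> (\<forall>z. poly (pderiv p) z = 0 \<longrightarrow> poly p z \<in> X)"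
  by (auto simp: critical_values_def)

lemma Poly_mtI: "centered_monic d p \<Longrightarrow> critical_values p \<subseteq> X \<Longrightarrow> coeff p \<in> Poly_mt d X"
  by (auto simp: Poly_mt_def)

lemma Poly_mtE:
  assumes "f \<in> Poly_mt d X"
  obtains p where "f = coeff p" "centered_monic d p" "critical_values p \<subseteq> X"
  using assms by (auto simp: Poly_mt_def)

lemma Poly_mt_mono: "X \<subseteq> Y \<Longrightarrow> Poly_mt d X \<subseteq> Poly_mt d Y"
  by (auto simp: Poly_mt_def)

lemma centered_monicI:
  assumes "coeff p d = 1" "\<And>i. i > d \<Longrightarrow> coeff p i = 0" "coeff p (d - 1) = 0"
  shows "centered_monic d p"
proof -
  have "degree p = d"
    using assms(1,2) by (intro antisym degree_le le_degree) auto
  then show ?thesis using assms unfolding centered_monic_def by auto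
qed

lemma
  assumes "centered_monic d p"
  shows centered_monic_degree: "degree p = d"
    and centered_monic_coeff_degree: "coeff p d = 1"
    and centered_monic_coeff_pred: "coeff p (d - 1) = 0"
  using assms by (auto simp: centered_monic_def)

lemma centered_monic_add:
  assumes "centered_monic d p" "degree h < d - 1"
  shows "centered_monic d (p + h)"
proof (rule centered_monicI)
  have "coeff h d = 0" "coeff h (d - 1) = 0"
    using assms(2) by (auto intro: coeff_eq_0)
  then show "coeff (p + h) d = 1" "coeff (p + h) (d - 1) = 0"
    using centered_monic_coeff_degree[OF assms(1)] centered_monic_coeff_pred[OF assms(1)] by simp_all
  show "coeff (p + h) i = 0" if "d < i" for i
    using that assms by (simp add: centered_monic_degree coeff_eq_0)
qed

lemma degree_pderiv_centered_monic: "centered_monic d p \<Longrightarrow> degree (pderiv p) = d - 1"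
  by (simp add: centered_monic_degree degree_pderiv)

lemma lead_coeff_pderiv_centered_monic:
  assumes "centered_monic d p" "d \<ge> 1"
  shows "lead_coeff (pderiv p) = of_nat d"
proof -
  obtain k where "d = Suc k" using assms(2) by (cases d) auto
  then show ?thesis
    using assms(1) by (simp add: degree_pderiv_centered_monic coeff_pderiv centered_monic_coeff_degree)
qed

lemma centered_monic_pderiv_decompose:
  assumes "centered_monic d p" "d \<ge> 1"
  obtains xs where "length xs = d - 1" "set xs = {z. poly (pderiv p) z = 0}"
    "pderiv p = smult (of_nat d) (\<Prod>x\<leftarrow>xs. [:-x, 1:])"
proof -
  have "pderiv p \<noteq> 0"
    using lead_coeff_pderiv_centered_monic[OF assms] assms(2) by auto
  then show ?thesis
    using that lead_coeff_pderiv_centered_monic[OF assms] degree_pderiv_centered_monic[OF assms(1)]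
    by (elim complex_poly_decompose_list) auto
qed

lemma finite_critical_points:
  assumes "centered_monic d p" "d \<ge> 1"
  shows "finite {z. poly (pderiv p) z = 0}"
  using centered_monic_pderiv_decompose[OF assms] by (metis finite_set)

lemma sum_critical_points_centered_monic:
  assumes "centered_monic d p" "d \<ge> 2"
    and "pderiv p = smult (of_nat d) (\<Prod>x\<leftarrow>xs. [:-x, 1:])" "length xs = d - 1"
  shows "sum_list xs = 0"
proof -
  obtain k where k: "d = Suc (Suc k)" using assms(2) by (metis add_2_eq_Suc le_Suc_ex)
  have "xs \<noteq> []" using assms(4) k by auto
  have "of_nat d * (- sum_list xs) = coeff (pderiv p) k"
    using coeff_prod_list_linear_pred[OF \<open>xs \<noteq> []\<close>] assms(3,4) k by simp
  also have "\<dots> = 0"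
    using centered_monic_coeff_pred[OF assms(1)] k by (simp add: coeff_pderiv)
  finally show ?thesis using assms(2) by simp
qed

definition poly_rescale :: "nat \<Rightarrow> complex \<Rightarrow> complex poly \<Rightarrow> complex poly" where
  "poly_rescale d s p = smult (inverse (s ^ d)) (p \<circ>\<^sub>p [:0, s:])"

lemma poly_poly_rescale: "poly (poly_rescale d s p) z = poly p (s * z) / s ^ d"
  by (simp add: poly_rescale_def poly_pcompose divide_inverse mult.commute)

lemma centered_monic_poly_rescale:
  assumes "centered_monic d p" "s \<noteq> 0"
  shows "centered_monic d (poly_rescale d s p)"
  using assms centered_monic_coeff_degree[OF assms(1)] centered_monic_coeff_pred[OF assms(1)]
  by (intro centered_monicI)
     (simp_all add: poly_rescale_def coeff_pcompose_linear centered_monic_degree coeff_eq_0)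

lemma pderiv_poly_rescale_eq_0_iff:
  assumes "s \<noteq> 0"
  shows "poly (pderiv (poly_rescale d s p)) z = 0 \<longleftrightarrow> poly (pderiv p) (s * z) = 0"
  using assms
  by (simp add: poly_rescale_def pderiv_smult pderiv_pcompose poly_pcompose pderiv_pCons mult.commute)

lemma critical_values_poly_rescale:
  assumes "s \<noteq> 0"
  shows "critical_values (poly_rescale d s p) = (\<lambda>v. v / s ^ d) ` critical_values p"
proof (intro equalityI subsetI)
  fix v assume "v \<in> critical_values (poly_rescale d s p)"
  then show "v \<in> (\<lambda>v. v / s ^ d) ` critical_values p"
    by (auto simp: critical_values_def pderiv_poly_rescale_eq_0_iff[OF assms] poly_poly_rescale)
next
  fix v assume "v \<in> (\<lambda>v. v / s ^ d) ` critical_values p"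
  then obtain z where "poly (pderiv p) z = 0" "v = poly p z / s ^ d"
    by (auto simp: critical_values_def)
  then show "v \<in> critical_values (poly_rescale d s p)"
    using critical_valuesI[of "poly_rescale d s p" "z / s"] assms
    by (simp add: pderiv_poly_rescale_eq_0_iff poly_poly_rescale)
qed

lemma critical_values_const_add: "critical_values ([:c:] + p) = (+) c ` critical_values p"
  by (auto simp: critical_values_def pderiv_add)

section \<open>Compactness\<close>

lemma centered_monic_limit:
  fixes p :: "nat \<Rightarrow> complex poly"
  assumes "\<And>n. centered_monic d (p n)" and "\<And>i. (\<lambda>n. coeff (p n) i) \<longlonglongrightarrow> l i"
  obtains q where "centered_monic d q" "l = coeff q"
proof -
  have lim_const: "l i = c" if "\<And>n. coeff (p n) i = c" for i c
    using assms(2)[of i] that by (simp add: LIMSEQ_const_iff)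
  have l0: "l i = 0" if "i > d" for i
    using that centered_monic_degree[OF assms(1)] by (intro lim_const coeff_eq_0) simp
  define q where "q = Poly (map l [0..<Suc d])"
  have "coeff q = l"
  proof
    fix i show "coeff q i = l i"
      using l0[of i] by (auto simp: q_def nth_default_def simp del: upt_Suc)
  qed
  moreover have "l d = 1"
    by (rule lim_const) (rule centered_monic_coeff_degree[OF assms(1)])
  moreover have "l (d - 1) = 0"
    by (rule lim_const) (rule centered_monic_coeff_pred[OF assms(1)])
  ultimately have "centered_monic d q"
    using l0 by (intro centered_monicI) auto
  then show ?thesis using that \<open>coeff q = l\<close> by blast
qed

text \<open>A critical point of \<open>p n\<close> near \<open>y\<close> is found by factoring \<open>pderiv (p n)\<close>, which is small
  at \<open>y\<close>.\<close>

lemma critical_value_limit: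
  fixes p :: "nat \<Rightarrow> complex poly"
  assumes d: "d \<ge> 2" and p: "\<And>n. centered_monic d (p n)" and q: "centered_monic d q"
    and lim: "\<And>i. (\<lambda>n. coeff (p n) i) \<longlonglongrightarrow> coeff q i"
    and y: "poly (pderiv q) y = 0"
  obtains c where "\<And>n. poly (pderiv (p n)) (c n) = 0" "(\<lambda>n. poly (p n) (c n)) \<longlonglongrightarrow> poly q y"
proof -
  have "\<exists>c. poly (pderiv (p n)) c = 0 \<and> of_nat d * norm (y - c) ^ (d - 1) \<le> norm (poly (pderiv (p n)) y)"
    for n
  proof -
    have "degree (pderiv (p n)) \<ge> 1" using degree_pderiv_centered_monic[OF p] d by simp
    then obtain c where "poly (pderiv (p n)) c = 0"
      "norm (lead_coeff (pderiv (p n))) * norm (y - c) ^ degree (pderiv (p n)) \<le> norm (poly (pderiv (p n)) y)"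
      by (rule exists_root_norm_power_le)
    then show ?thesis
      using degree_pderiv_centered_monic[OF p] lead_coeff_pderiv_centered_monic[OF p] d by auto
  qed
  then obtain c where c: "\<And>n. poly (pderiv (p n)) (c n) = 0"
    and c_le: "\<And>n. of_nat d * norm (y - c n) ^ (d - 1) \<le> norm (poly (pderiv (p n)) y)"
    by metis
  have "(\<lambda>n. poly (pderiv (p n)) y) \<longlonglongrightarrow> poly (pderiv q) y"
    using degree_pderiv_centered_monic[OF p] degree_pderiv_centered_monic[OF q]
    by (intro tendsto_poly_coeffwise[where n = d] tendsto_coeff_pderiv lim) auto
  then have "(\<lambda>n. norm (poly (pderiv (p n)) y)) \<longlonglongrightarrow> 0"
    using y by (simp add: tendsto_norm_zero_iff)
  then have "(\<lambda>n. of_nat d * norm (y - c n) ^ (d - 1)) \<longlonglongrightarrow> 0"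
    by (rule tendsto_sandwich[rotated 2, OF tendsto_const]) (use c_le in simp_all)
  then have "(\<lambda>n. root (d - 1) (norm (y - c n) ^ (d - 1))) \<longlonglongrightarrow> root (d - 1) 0"
    using d by (intro tendsto_real_root) simp
  then have "(\<lambda>n. norm (c n - y)) \<longlonglongrightarrow> 0"
    using d by (simp add: real_root_power_cancel norm_minus_commute)
  then have cy: "c \<longlonglongrightarrow> y"
    by (simp add: tendsto_norm_zero_iff LIM_zero_iff)
  have "(\<lambda>n. poly (p n) (c n)) \<longlonglongrightarrow> poly q y"
    using centered_monic_degree[OF p] centered_monic_degree[OF q]
    by (intro tendsto_poly_coeffwise[where n = d] lim cy) auto
  with c that show ?thesis by blast
qed

lemma closed_Poly_mt:
  assumes d: "d \<ge> 2" and "closed K"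
  shows "closed (Poly_mt d K)"
  unfolding closed_sequential_limits
proof (intro allI impI, elim conjE)
  fix f l assume f: "\<forall>n. f n \<in> Poly_mt d K" and lim: "f \<longlonglongrightarrow> l"
  then have "\<forall>n. \<exists>p. f n = coeff p \<and> centered_monic d p \<and> critical_values p \<subseteq> K"
    by (auto simp: Poly_mt_def)
  then obtain p where p: "\<And>n. f n = coeff (p n)" "\<And>n. centered_monic d (p n)"
    "\<And>n. critical_values (p n) \<subseteq> K"
    using choice[of "\<lambda>n p. f n = coeff p \<and> centered_monic d p \<and> critical_values p \<subseteq> K"] by blast
  have lim_i: "(\<lambda>n. coeff (p n) i) \<longlonglongrightarrow> l i" for i
    using lim by (simp add: tendsto_fun_iff p(1))
  obtain q where q: "centered_monic d q" "l = coeff q"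
    by (rule centered_monic_limit[OF p(2) lim_i])
  have "poly q y \<in> K" if y: "poly (pderiv q) y = 0" for y
  proof -
    obtain c where c: "\<And>n. poly (pderiv (p n)) (c n) = 0"
      and lim_c: "(\<lambda>n. poly (p n) (c n)) \<longlonglongrightarrow> poly q y"
      using critical_value_limit[OF d p(2) q(1) lim_i[unfolded q(2)] y] by blast
    have "\<forall>n. poly (p n) (c n) \<in> K"
      using p(3) c by (simp add: critical_values_subset_iff)
    then show ?thesis using closed_sequentially[OF \<open>closed K\<close> _ lim_c] by blast
  qed
  then show "l \<in> Poly_mt d K"
    using q by (simp add: Poly_mtI critical_values_subset_iff)
qed

lemma card_critical_points_le_1:
  fixes q :: "complex poly"
  assumes "pderiv q \<noteq> 0" and roots: "\<And>z. poly (pderiv q) z = 0 \<Longrightarrow> poly q z = 0"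
  shows "card {z. poly (pderiv q) z = 0} \<le> 1"
proof -
  define R where "R = {z. poly (pderiv q) z = 0}"
  obtain xs where xs: "mset xs = proots (pderiv q)" "length xs = degree (pderiv q)" "set xs = R"
    using complex_poly_decompose_list[OF assms(1)] unfolding R_def by metis
  have "q \<noteq> 0" using assms(1) by auto
  have "(\<Sum>c\<in>R. order c (pderiv q)) = (\<Sum>c\<in>set xs. count (mset xs) c)"
    using xs assms(1) by simp
  also have "\<dots> = degree q - 1" by (simp add: count_mset sum_count_set xs(2) degree_pderiv)
  finally have "degree q - 1 + card R = (\<Sum>c\<in>R. order c q)"
    using roots \<open>q \<noteq> 0\<close> by (simp add: R_def order_pderiv sum_Suc)
  also have "\<dots> \<le> (\<Sum>c | poly q c = 0. order c q)"
    using roots poly_roots_finite[OF \<open>q \<noteq> 0\<close>] by (intro sum_mono2) (auto simp: R_def)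
  also have "\<dots> \<le> degree q"
    using \<open>q \<noteq> 0\<close> by (rule sum_order_le_degree)
  finally have "degree q - 1 + card R \<le> degree q" .
  moreover have "degree q \<ge> 1"
    using assms(1) by (metis degree_0 le_less_linear less_one pderiv_eq_0_iff)
  ultimately show ?thesis by (simp add: R_def)
qed

text \<open>A centered polynomial with all critical values \<open>0\<close> is \<open>z ^ d\<close>: its critical points
  are roots, so \<open>pderiv q\<close> has a single root of multiplicity \<open>d - 1\<close>, which sums to \<open>0\<close>.\<close>

lemma critical_point_eq_0_if_critical_values_0:
  assumes d: "d \<ge> 2" and q: "centered_monic d q"
    and values_0: "\<And>y. poly (pderiv q) y = 0 \<Longrightarrow> poly q y = 0"
    and u: "poly (pderiv q) u = 0"
  shows "u = 0"
proof -
  obtain xs where xs: "length xs = d - 1" "set xs = {z. poly (pderiv q) z = 0}"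
    "pderiv q = smult (of_nat d) (\<Prod>x\<leftarrow>xs. [:-x, 1:])"
    using centered_monic_pderiv_decompose[OF q] d by (metis one_le_numeral order_trans)
  have "pderiv q \<noteq> 0" using xs(3) d lead_coeff_prod_list_linear[of xs] by auto
  then have "card (set xs) \<le> 1"
    using card_critical_points_le_1 values_0 xs(2) by metis
  moreover have "u \<in> set xs" using u xs(2) by simp
  ultimately have "replicate (length xs) u = xs"
    by (intro replicate_length_same) (auto simp: card_le_Suc0_iff_eq)
  then have "sum_list xs = of_nat (d - 1) * u"
    using xs(1) by (metis sum_list_replicate)
  moreover have "sum_list xs = 0"
    using sum_critical_points_centered_monic[OF q d xs(3) xs(1)] .
  ultimately show "u = 0" using d by simp
qed

lemma norm_coeff_Suc_centered_monic_le:
  assumes p: "centered_monic d p" and "d \<ge> 1" "r \<ge> 0"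
    and crit_r: "\<And>z. poly (pderiv p) z = 0 \<Longrightarrow> norm z \<le> r"
  shows "norm (coeff p (Suc j)) \<le> real d * (1 + r) ^ (d - 1)"
proof -
  obtain xs where xs: "length xs = d - 1" "set xs = {z. poly (pderiv p) z = 0}"
    "pderiv p = smult (of_nat d) (\<Prod>x\<leftarrow>xs. [:-x, 1:])"
    using centered_monic_pderiv_decompose[OF p \<open>d \<ge> 1\<close>] by metis
  have "norm (coeff p (Suc j)) \<le> real (Suc j) * norm (coeff p (Suc j))"
    by (rule mult_le_cancel_right1[THEN iffD2]) simp
  also have "\<dots> = norm (coeff (pderiv p) j)" by (simp only: coeff_pderiv norm_mult norm_of_nat)
  also have "\<dots> = real d * norm (coeff (\<Prod>x\<leftarrow>xs. [:-x, 1:]) j)" by (simp add: xs(3) norm_mult)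
  also have "\<dots> \<le> real d * (1 + r) ^ (d - 1)"
    using norm_coeff_prod_list_linear_le[of xs r j] crit_r \<open>r \<ge> 0\<close> xs(1,2)
    by (simp add: mult_left_mono)
  finally show ?thesis .
qed

lemma norm_coeff_centered_monic_le:
  assumes d: "d \<ge> 2" and p: "centered_monic d p"
    and crit_r: "\<And>z. poly (pderiv p) z = 0 \<Longrightarrow> norm z \<le> r"
    and crit_M: "\<And>z. poly (pderiv p) z = 0 \<Longrightarrow> norm (poly p z) \<le> M"
  shows "norm (coeff p i) \<le> M + (real d + 1) * (real d * (1 + r) ^ (d - 1)) * (1 + r) ^ d"
proof -
  define \<beta> where "\<beta> = real d * (1 + r) ^ (d - 1)"
  obtain xs where xs: "length xs = d - 1" "set xs = {z. poly (pderiv p) z = 0}"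
    using centered_monic_pderiv_decompose[OF p] d by (metis one_le_numeral order_trans)
  have "xs \<noteq> []" using xs(1) d by auto
  then obtain c where c: "poly (pderiv p) c = 0" using hd_in_set xs(2) by blast
  have r: "r \<ge> 0" using crit_r[OF c] norm_ge_zero by (rule order_trans[rotated])
  have M: "M \<ge> 0" using crit_M[OF c] norm_ge_zero by (rule order_trans[rotated])
  have coeff_Suc: "norm (coeff p (Suc j)) \<le> \<beta>" for j
    unfolding \<beta>_def using p _ r crit_r by (rule norm_coeff_Suc_centered_monic_le) (use d in simp)
  have "1 \<le> (1 + r) ^ d" using r by (simp add: one_le_power)
  also have "\<dots> \<le> (real d + 1) * (1 + r) ^ d"
    using mult_right_mono[of 1 "real d + 1" "(1 + r) ^ d"] r by simp
  finally have "\<beta> * 1 \<le> \<beta> * ((real d + 1) * (1 + r) ^ d)"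
    using r by (intro mult_left_mono) (simp_all add: \<beta>_def)
  then have \<beta>_le: "\<beta> \<le> (real d + 1) * \<beta> * (1 + r) ^ d" by (simp add: algebra_simps)
  define p1 where "p1 = p - [:coeff p 0:]"
  have "degree p1 \<le> d"
    unfolding p1_def using centered_monic_degree[OF p] by (intro degree_diff_le) auto
  then have "norm (poly p1 c) \<le> (\<Sum>i\<le>d. norm (coeff p1 i * c ^ i))"
    by (simp add: poly_altdef_le norm_sum)
  also have "\<dots> \<le> (\<Sum>i\<le>d. \<beta> * (1 + r) ^ d)"
  proof (intro sum_mono)
    fix i assume "i \<in> {..d}"
    have "norm c ^ i \<le> (1 + r) ^ i" using crit_r[OF c] by (intro power_mono) auto
    also have "\<dots> \<le> (1 + r) ^ d" using r \<open>i \<in> {..d}\<close> by (intro power_increasing) auto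
    finally have "norm c ^ i \<le> (1 + r) ^ d" .
    moreover have "norm (coeff p1 i) \<le> \<beta>"
      using coeff_Suc r by (cases i) (simp_all add: p1_def \<beta>_def)
    ultimately show "norm (coeff p1 i * c ^ i) \<le> \<beta> * (1 + r) ^ d"
      by (simp add: norm_mult norm_power mult_mono \<beta>_def r)
  qed
  finally have "norm (poly p1 c) \<le> (real d + 1) * \<beta> * (1 + r) ^ d"
    by (simp add: algebra_simps)
  moreover have "norm (coeff p 0) \<le> norm (poly p c) + norm (poly p1 c)"
    using norm_triangle_ineq4[of "poly p c" "poly p1 c"] by (simp add: p1_def)
  ultimately have coeff_0: "norm (coeff p 0) \<le> M + (real d + 1) * \<beta> * (1 + r) ^ d"
    using crit_M[OF c] by linarith
  have "norm (coeff p i) \<le> M + (real d + 1) * \<beta> * (1 + r) ^ d"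
  proof (cases i)
    case (Suc j)
    then have "norm (coeff p i) \<le> \<beta>" using coeff_Suc[of j] by simp
    then show ?thesis using \<beta>_le M by linarith
  qed (use coeff_0 in simp)
  then show ?thesis by (simp add: \<beta>_def)
qed

lemma compact_coeff_box: "compact {f :: nat \<Rightarrow> complex. \<forall>i. norm (f i) \<le> B}"
proof -
  have "{f :: nat \<Rightarrow> complex. \<forall>i. norm (f i) \<le> B} = PiE UNIV (\<lambda>_. cball 0 B)"
    by (auto simp: PiE_def Pi_def)
  moreover have "compactin (product_topology (\<lambda>_. euclidean) UNIV) (PiE UNIV (\<lambda>_::nat. cball (0::complex) B))"
    by (subst compactin_PiE) auto
  ultimately show ?thesis by (simp add: euclidean_product_topology)
qed

text \<open>The limit of a convergent subsequence of the \<open>P n\<close> has all critical values \<open>0\<close>, hence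
  \<open>0\<close> as its only critical point.\<close>

lemma critical_points_subseq_tendsto_0:
  fixes P :: "nat \<Rightarrow> complex poly"
  assumes d: "d \<ge> 2" and P: "\<And>n. centered_monic d (P n)"
    and crit_1: "\<And>n z. poly (pderiv (P n)) z = 0 \<Longrightarrow> norm z \<le> 1"
    and values_e: "\<And>n. critical_values (P n) \<subseteq> cball 0 (e n)" and e: "e \<longlonglongrightarrow> 0"
    and u: "\<And>n. poly (pderiv (P n)) (u n) = 0"
  obtains \<sigma> where "strict_mono \<sigma>" "(u \<circ> \<sigma>) \<longlonglongrightarrow> 0"
proof -
  obtain E where E: "\<And>n. norm (e n) \<le> E"
    using BseqE[OF convergent_imp_Bseq[OF convergentI[OF e]]] by blast
  have values_E: "norm (poly (P n) z) \<le> E" if "poly (pderiv (P n)) z = 0" for n z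
    using values_e[of n] E[of n] critical_valuesI[OF that] by (auto simp: dist_norm)
  define F where "F = E + (real d + 1) * (real d * (1 + 1) ^ (d - 1)) * (1 + 1) ^ d"
  have "\<forall>n. (coeff \<circ> P) n \<in> {f. \<forall>i. norm (f i) \<le> F}"
    unfolding F_def using norm_coeff_centered_monic_le[OF d P crit_1 values_E] by simp
  then obtain l r where r: "strict_mono r" "((coeff \<circ> P) \<circ> r) \<longlonglongrightarrow> l"
    using compact_imp_seq_compact[OF compact_coeff_box[of F]] unfolding seq_compact_def by blast
  have "\<forall>n. (u \<circ> r) n \<in> cball 0 1" using crit_1[OF u] by simp
  then obtain u0 r' where r': "strict_mono r'" "((u \<circ> r) \<circ> r') \<longlonglongrightarrow> u0"
    using compact_imp_seq_compact[OF compact_cball[of 0 1]] unfolding seq_compact_def by blast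
  define \<sigma> where "\<sigma> = r \<circ> r'"
  have lim_u: "(\<lambda>n. u (\<sigma> n)) \<longlonglongrightarrow> u0" using r'(2) by (simp add: \<sigma>_def o_def)
  have "(\<lambda>n. coeff (P (\<sigma> n))) \<longlonglongrightarrow> l"
    using LIMSEQ_subseq_LIMSEQ[OF r(2) r'(1)] by (simp add: \<sigma>_def o_def)
  then have lim_coeff: "(\<lambda>n. coeff (P (\<sigma> n)) i) \<longlonglongrightarrow> l i" for i
    by (simp add: tendsto_fun_iff)
  then obtain q where q: "centered_monic d q" "l = coeff q"
    by (rule centered_monic_limit[OF P])
  have "(\<lambda>n. poly (pderiv (P (\<sigma> n))) (u (\<sigma> n))) \<longlonglongrightarrow> poly (pderiv q) u0"
    using degree_pderiv_centered_monic[OF P] degree_pderiv_centered_monic[OF q(1)] lim_coeff q(2)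
    by (intro tendsto_poly_coeffwise[where n = d] tendsto_coeff_pderiv lim_u) auto
  then have u0: "poly (pderiv q) u0 = 0" using u by (simp add: LIMSEQ_const_iff)
  have "poly q y = 0" if y: "poly (pderiv q) y = 0" for y
  proof -
    obtain c where c: "\<And>n. poly (pderiv (P (\<sigma> n))) (c n) = 0"
      "(\<lambda>n. poly (P (\<sigma> n)) (c n)) \<longlonglongrightarrow> poly q y"
      using critical_value_limit[OF d P q(1) lim_coeff[unfolded q(2)] y] by blast
    have bound: "norm (poly (P (\<sigma> n)) (c n)) \<le> e (\<sigma> n)" for n
      using values_e[of "\<sigma> n"] critical_valuesI[OF c(1)[of n]] by (auto simp: dist_norm)
    have e_\<sigma>: "(\<lambda>n. e (\<sigma> n)) \<longlonglongrightarrow> 0"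
      using LIMSEQ_subseq_LIMSEQ[OF e strict_mono_o[OF r(1) r'(1)]] by (simp add: \<sigma>_def o_def)
    have "(\<lambda>n. poly (P (\<sigma> n)) (c n)) \<longlonglongrightarrow> 0"
      by (rule Lim_null_comparison[where g = "\<lambda>n. e (\<sigma> n)"]) (simp_all add: bound e_\<sigma>)
    with c(2) show ?thesis by (rule LIMSEQ_unique)
  qed
  then have "u0 = 0" by (rule critical_point_eq_0_if_critical_values_0[OF d q(1) _ u0])
  then show ?thesis
    using that strict_mono_o[OF r(1) r'(1)] lim_u by (simp add: \<sigma>_def o_def)
qed

lemma rescale_critical_points_into_unit_disc:
  assumes d: "d \<ge> 2" and p: "centered_monic d p" and w: "poly (pderiv p) w = 0" "w \<noteq> 0"
  obtains \<rho> :: real and u where "norm w \<le> \<rho>"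
    "\<And>z. poly (pderiv (poly_rescale d (of_real \<rho>) p)) z = 0 \<Longrightarrow> norm z \<le> 1"
    "poly (pderiv (poly_rescale d (of_real \<rho>) p)) u = 0" "norm u = 1"
proof -
  define R where "R = {z. poly (pderiv p) z = 0}"
  define \<rho> where "\<rho> = Max (norm ` R)"
  have "finite R" using finite_critical_points[OF p] d by (simp add: R_def)
  have "w \<in> R" using w(1) by (simp add: R_def)
  have \<rho>_ge: "norm z \<le> \<rho>" if "z \<in> R" for z
    unfolding \<rho>_def using \<open>finite R\<close> that by (intro Max_ge) auto
  have "\<rho> \<in> norm ` R"
    unfolding \<rho>_def using \<open>finite R\<close> \<open>w \<in> R\<close> by (intro Max_in) auto
  then obtain v where v: "v \<in> R" "norm v = \<rho>" by auto
  have "0 < norm w" using w(2) by simp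
  then have "\<rho> > 0" using \<rho>_ge[OF \<open>w \<in> R\<close>] by linarith
  then have \<rho>0: "complex_of_real \<rho> \<noteq> 0" by simp
  have crit: "poly (pderiv (poly_rescale d (of_real \<rho>) p)) z = 0 \<longleftrightarrow> of_real \<rho> * z \<in> R" for z
    by (simp add: R_def pderiv_poly_rescale_eq_0_iff[OF \<rho>0])
  show ?thesis
  proof
    show "norm w \<le> \<rho>" using \<rho>_ge[OF \<open>w \<in> R\<close>] .
    show "norm z \<le> 1" if "poly (pderiv (poly_rescale d (of_real \<rho>) p)) z = 0" for z
      using \<rho>_ge[of "of_real \<rho> * z"] crit[of z] that \<open>\<rho> > 0\<close> by (simp add: norm_mult)
    show "poly (pderiv (poly_rescale d (of_real \<rho>) p)) (v / of_real \<rho>) = 0"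
      using crit v(1) \<rho>0 by simp
    show "norm (v / of_real \<rho>) = 1" using v(2) \<open>\<rho> > 0\<close> by (simp add: norm_divide)
  qed
qed

lemma critical_points_bounded:
  assumes d: "d \<ge> 2"
  obtains C where "\<And>p z. centered_monic d p \<Longrightarrow> critical_values p \<subseteq> cball 0 M \<Longrightarrow>
    poly (pderiv p) z = 0 \<Longrightarrow> norm z \<le> C"
proof -
  have "\<exists>C. \<forall>p z. centered_monic d p \<and> critical_values p \<subseteq> cball 0 M \<and> poly (pderiv p) z = 0
    \<longrightarrow> norm z \<le> C"
  proof (rule ccontr)
    assume contra: "\<not> ?thesis"
    have "\<forall>n::nat. \<exists>p. \<exists>w. centered_monic d p \<and> critical_values p \<subseteq> cball 0 M \<and>
      poly (pderiv p) w = 0 \<and> real n + 1 < norm w"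
      using contra[simplified not_ex not_all not_imp not_le] by blast
    then obtain p where "\<forall>n. \<exists>w. centered_monic d (p n) \<and> critical_values (p n) \<subseteq> cball 0 M \<and>
      poly (pderiv (p n)) w = 0 \<and> real n + 1 < norm w"
      by (rule choice[THEN exE])
    then obtain w where "\<forall>n. centered_monic d (p n) \<and> critical_values (p n) \<subseteq> cball 0 M \<and>
      poly (pderiv (p n)) (w n) = 0 \<and> real n + 1 < norm (w n)"
      by (rule choice[THEN exE])
    then have p: "\<And>n. centered_monic d (p n)" "\<And>n. critical_values (p n) \<subseteq> cball 0 M"
      and w: "\<And>n. poly (pderiv (p n)) (w n) = 0" "\<And>n. real n + 1 < norm (w n)"
      by auto
    have "\<forall>n. \<exists>\<rho> u. norm (w n) \<le> \<rho> \<and>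
      (\<forall>z. poly (pderiv (poly_rescale d (of_real \<rho>) (p n))) z = 0 \<longrightarrow> norm z \<le> 1) \<and>
      poly (pderiv (poly_rescale d (of_real \<rho>) (p n))) u = 0 \<and> norm u = 1"
    proof
      fix n
      have "w n \<noteq> 0" using w(2)[of n] by auto
      then show "\<exists>\<rho> u. norm (w n) \<le> \<rho> \<and>
        (\<forall>z. poly (pderiv (poly_rescale d (of_real \<rho>) (p n))) z = 0 \<longrightarrow> norm z \<le> 1) \<and>
        poly (pderiv (poly_rescale d (of_real \<rho>) (p n))) u = 0 \<and> norm u = 1"
        using rescale_critical_points_into_unit_disc[OF d p(1) w(1)] by metis
    qed
    then obtain \<rho> u where \<rho>: "\<And>n. norm (w n) \<le> \<rho> n"
      and crit_1: "\<And>n z. poly (pderiv (poly_rescale d (of_real (\<rho> n)) (p n))) z = 0 \<Longrightarrow> norm z \<le> 1"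
      and u: "\<And>n. poly (pderiv (poly_rescale d (of_real (\<rho> n)) (p n))) (u n) = 0"
      and u1: "\<And>n. norm (u n) = 1"
      by metis
    define P where "P n = poly_rescale d (of_real (\<rho> n)) (p n)" for n
    define e where "e n = M / \<rho> n ^ d" for n
    have \<rho>_gt: "real n + 1 < \<rho> n" for n using \<rho>[of n] w(2)[of n] by linarith
    then have \<rho>_pos: "\<rho> n > 0" for n using of_nat_0_le_iff[of n] by (smt (verit))
    then have \<rho>0: "complex_of_real (\<rho> n) \<noteq> 0" for n by (metis of_real_eq_0_iff less_irrefl)
    have P: "centered_monic d (P n)" for n
      unfolding P_def using p(1) \<rho>0 by (rule centered_monic_poly_rescale)
    have values_e: "critical_values (P n) \<subseteq> cball 0 (e n)" for n
    proof
      fix y assume "y \<in> critical_values (P n)"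
      then obtain x where "x \<in> critical_values (p n)" "y = x / of_real (\<rho> n) ^ d"
        by (auto simp: P_def critical_values_poly_rescale[OF \<rho>0])
      moreover have "norm x \<le> M" using subsetD[OF p(2) \<open>x \<in> critical_values (p n)\<close>] by simp
      ultimately show "y \<in> cball 0 (e n)"
        using \<rho>_pos[of n] by (simp add: e_def norm_divide norm_power divide_right_mono)
    qed
    have e: "e \<longlonglongrightarrow> 0"
    proof (rule Lim_null_comparison)
      have "norm (e n) \<le> \<bar>M\<bar> * inverse (real (Suc n))" for n
      proof -
        have "real (Suc n) \<le> \<rho> n ^ 1" using \<rho>_gt[of n] by simp
        also have "\<dots> \<le> \<rho> n ^ d" using \<rho>_gt[of n] d by (intro power_increasing) auto
        finally have "inverse (\<rho> n ^ d) \<le> inverse (real (Suc n))"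
          by (intro le_imp_inverse_le) auto
        then show ?thesis
          using \<rho>_pos[of n] by (simp add: e_def abs_mult divide_inverse mult_left_mono)
      qed
      then show "\<forall>\<^sub>F n in sequentially. norm (e n) \<le> \<bar>M\<bar> * inverse (real (Suc n))" by simp
      show "(\<lambda>n. \<bar>M\<bar> * inverse (real (Suc n))) \<longlonglongrightarrow> 0"
        by (rule tendsto_mult_right_zero[OF LIMSEQ_inverse_real_of_nat])
    qed
    obtain \<sigma> where "(u \<circ> \<sigma>) \<longlonglongrightarrow> 0"
      using critical_points_subseq_tendsto_0[where P = P and u = u and e = e, OF d P _ values_e e]
        crit_1 u unfolding P_def by blast
    then have "(\<lambda>n. norm (u (\<sigma> n))) \<longlonglongrightarrow> 0"
      by (simp add: o_def tendsto_norm_zero)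
    then show False using u1 by (simp add: LIMSEQ_const_iff)
  qed
  then show ?thesis using that by blast
qed

lemma compact_Poly_mt:
  assumes d: "d \<ge> 2" and "compact K"
  shows "compact (Poly_mt d K)"
proof -
  obtain M where "\<forall>x\<in>K. norm x \<le> M"
    using compact_imp_bounded[OF \<open>compact K\<close>] bounded_iff by blast
  then have M: "K \<subseteq> cball 0 M" by auto
  obtain C where C: "\<And>p z. centered_monic d p \<Longrightarrow> critical_values p \<subseteq> cball 0 M \<Longrightarrow>
      poly (pderiv p) z = 0 \<Longrightarrow> norm z \<le> C"
    using critical_points_bounded[where M = M, OF d] by metis
  define F where "F = M + (real d + 1) * (real d * (1 + C) ^ (d - 1)) * (1 + C) ^ d"
  have "Poly_mt d K \<subseteq> {f. \<forall>i. norm (f i) \<le> F}"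
  proof
    fix f assume "f \<in> Poly_mt d K"
    then obtain p where p: "f = coeff p" "centered_monic d p" "critical_values p \<subseteq> K"
      by (rule Poly_mtE)
    have cv: "critical_values p \<subseteq> cball 0 M" using p(3) M by (rule order_trans)
    have crit_C: "norm z \<le> C" if "poly (pderiv p) z = 0" for z
      using C[OF p(2) cv that] .
    have crit_M: "norm (poly p z) \<le> M" if "poly (pderiv p) z = 0" for z
      using subsetD[OF cv critical_valuesI[OF that]] by simp
    show "f \<in> {f. \<forall>i. norm (f i) \<le> F}"
      using norm_coeff_centered_monic_le[OF d p(2) crit_C crit_M] p(1) by (simp add: F_def)
  qed
  then have "Poly_mt d K = {f. \<forall>i. norm (f i) \<le> F} \<inter> Poly_mt d K" by blast
  also have "compact \<dots>"
    using compact_coeff_box closed_Poly_mt[OF d compact_imp_closed[OF \<open>compact K\<close>]]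
    by (rule compact_Int_closed)
  finally show ?thesis .
qed

section \<open>Density\<close>

lemma coeff_in_closure_Poly_mt:
  assumes "\<And>n. centered_monic d (q n)" "\<And>n. critical_values (q n) \<subseteq> Y"
    and "\<And>i. (\<lambda>n. coeff (q n) i) \<longlonglongrightarrow> coeff p i"
  shows "coeff p \<in> closure (Poly_mt d Y)"
  unfolding closure_sequential
proof (intro exI conjI)
  show "\<forall>n. coeff (q n) \<in> Poly_mt d Y" using assms(1,2) by (simp add: Poly_mtI)
  show "(\<lambda>n. coeff (q n)) \<longlonglongrightarrow> coeff p" using assms(3) by (simp add: tendsto_fun_iff)
qed

lemma coeff_poly_rescale: "coeff (poly_rescale d s p) i = s ^ i / s ^ d * coeff p i"
  by (simp add: poly_rescale_def coeff_pcompose_linear divide_inverse mult_ac)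

lemma coeff_in_closure_Poly_mt_contract:
  assumes d: "d \<ge> 2" and p: "centered_monic d p" "critical_values p \<subseteq> K"
    and contract: "\<And>v l. v \<in> K \<Longrightarrow> 0 < l \<Longrightarrow> l < 1 \<Longrightarrow> of_real (1 - l) * m + of_real l * v \<in> Y"
  shows "coeff p \<in> closure (Poly_mt d Y)"
proof -
  define s :: "nat \<Rightarrow> real" where "s = (\<lambda>n. 1 + inverse (real (Suc n)))"
  define q where "q n = [:of_real (1 - 1 / s n ^ d) * m:] + poly_rescale d (of_real (s n)) p" for n
  have s: "s n > 1" for n by (simp add: s_def)
  then have l: "0 < 1 / s n ^ d" "1 / s n ^ d < 1" for n
    using d by (auto simp: less_trans[OF zero_less_one])
  show ?thesis
  proof (rule coeff_in_closure_Poly_mt)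
    show "centered_monic d (q n)" for n
      unfolding q_def using d s[of n]
      by (subst add.commute) (intro centered_monic_add centered_monic_poly_rescale p(1); simp)
    show "critical_values (q n) \<subseteq> Y" for n
      using p(2) s[of n] contract[OF _ l[of n]]
      by (auto simp: q_def critical_values_const_add critical_values_poly_rescale divide_inverse
          mult.commute)
    have "s \<longlonglongrightarrow> 1"
      unfolding s_def using tendsto_add[OF tendsto_const LIMSEQ_inverse_real_of_nat, of 1] by simp
    then show "(\<lambda>n. coeff (q n) i) \<longlonglongrightarrow> coeff p i" for i
      by (cases i) (auto simp: q_def coeff_poly_rescale intro!: tendsto_eq_intros)
  qed
qed

lemma exists_interpolating_poly:
  fixes g :: "'a::field \<Rightarrow> 'a"
  assumes "finite S"
  obtains h where "degree h \<le> card S - 1" "\<And>c. c \<in> S \<Longrightarrow> poly h c = g c"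
proof -
  have "\<exists>h. degree h \<le> card S - 1 \<and> (\<forall>c\<in>S. poly h c = g c)"
    using assms
  proof (induction S rule: finite_induct)
    case empty
    show ?case by (intro exI[of _ 0]) simp
  next
    case (insert a S)
    then obtain h where h: "degree h \<le> card S - 1" "\<forall>c\<in>S. poly h c = g c" by blast
    define L where "L = (\<Prod>s\<in>S. [:-s, 1:])"
    have L: "poly L a \<noteq> 0" "\<And>c. c \<in> S \<Longrightarrow> poly L c = 0"
      using insert by (auto simp: L_def poly_prod prod_zero_iff)
    have "degree L \<le> card S"
      unfolding L_def using degree_prod_sum_le[OF insert(1), of "\<lambda>s. [:-s, 1:]"] by simp
    define h' where "h' = h + smult ((g a - poly h a) / poly L a) L"
    have "degree h' \<le> card S"
      unfolding h'_def using h(1) \<open>degree L \<le> card S\<close> degree_add_le degree_smult_le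
      by (metis diff_le_self le_trans)
    moreover have "\<forall>c\<in>insert a S. poly h' c = g c"
      using h(2) L by (simp add: h'_def)
    ultimately show ?case using insert(1,2) by (intro exI[of _ h']) simp
  qed
  then show ?thesis using that by blast
qed

lemma finite_separated:
  fixes S :: "'a::metric_space set"
  assumes "finite S"
  obtains \<delta> where "\<delta> > 0" "\<And>x y. x \<in> S \<Longrightarrow> y \<in> S \<Longrightarrow> x \<noteq> y \<Longrightarrow> \<delta> \<le> dist x y"
proof
  define D where "D = {dist x y | x y. x \<in> S \<and> y \<in> S \<and> x \<noteq> y}"
  have "D \<subseteq> (\<lambda>(x, y). dist x y) ` (S \<times> S)" by (auto simp: D_def)
  then have fin: "finite (insert 1 D)" using assms by (auto intro: finite_subset)
  have "\<forall>a\<in>insert 1 D. 0 < a" by (auto simp: D_def)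
  then show "Min (insert 1 D) > 0" using fin by (simp add: Min_gr_iff)
  show "Min (insert 1 D) \<le> dist x y" if "x \<in> S" "y \<in> S" "x \<noteq> y" for x y
  proof (rule Min_le[OF fin])
    show "dist x y \<in> insert 1 D" using that by (auto simp: D_def)
  qed
qed

text \<open>Near a root \<open>c\<close> that is far from the other roots, \<open>|P|\<close> is essentially monotone along
  segments issuing from \<open>c\<close>: every linear factor of \<open>P\<close> grows by at most \<open>4/3\<close>.\<close>

lemma norm_poly_on_segment_le:
  fixes P :: "complex poly"
  assumes "P \<noteq> 0" "poly P c = 0"
    and sep: "\<And>x. poly P x = 0 \<Longrightarrow> x \<noteq> c \<Longrightarrow> \<delta> \<le> norm (x - c)"
    and near: "4 * norm (z - c) \<le> \<delta>" and w: "w \<in> closed_segment c z"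
  shows "norm (poly P w) \<le> (4/3) ^ degree P * norm (poly P z)"
proof -
  obtain xs where xs: "length xs = degree P" "set xs = {x. poly P x = 0}"
    "P = smult (lead_coeff P) (\<Prod>x\<leftarrow>xs. [:-x, 1:])"
    using complex_poly_decompose_list[OF assms(1)] by metis
  have wc: "norm (w - c) \<le> norm (z - c)" and wz: "norm (w - z) \<le> norm (z - c)"
    using segment_bound[OF w] by (auto simp: norm_minus_commute)
  have factor: "norm (w - x) \<le> 4/3 * norm (z - x)" if "x \<in> set xs" for x
  proof (cases "x = c")
    case True
    show ?thesis using wc norm_ge_zero[of "z - c"] unfolding True by linarith
  next
    case False
    then have "\<delta> \<le> norm (x - c)" using sep that xs(2) by simp
    also have "\<dots> \<le> norm (z - x) + norm (z - c)"
      using norm_triangle_ineq[of "x - z" "z - c"] by (simp add: norm_minus_commute)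
    finally have "3 * norm (z - c) \<le> norm (z - x)" using near by linarith
    moreover have "norm (w - x) \<le> norm (w - z) + norm (z - x)"
      using norm_triangle_ineq[of "w - z" "z - x"] by simp
    ultimately show ?thesis using wz by linarith
  qed
  have "norm (poly P w) = norm (lead_coeff P) * (\<Prod>x\<leftarrow>xs. norm (w - x))"
    by (rule norm_poly_eq_prod_list[OF xs(3)])
  also have "\<dots> \<le> norm (lead_coeff P) * ((4/3) ^ length xs * (\<Prod>x\<leftarrow>xs. norm (z - x)))"
    using factor by (intro mult_left_mono prod_list_le_power_mult_prod_list) auto
  also have "\<dots> = (4/3) ^ degree P * norm (poly P z)"
    by (simp add: norm_poly_eq_prod_list[OF xs(3)] xs(1))
  finally show ?thesis .
qed

lemma norm_poly_diff_le_near_critical_point: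
  fixes p :: "complex poly"
  assumes "pderiv p \<noteq> 0" "poly (pderiv p) c = 0"
    and "\<And>x. poly (pderiv p) x = 0 \<Longrightarrow> x \<noteq> c \<Longrightarrow> \<delta> \<le> norm (x - c)" and "4 * norm (z - c) \<le> \<delta>"
  shows "norm (poly p z - poly p c)
    \<le> (4/3) ^ degree (pderiv p) * norm (poly (pderiv p) z) * norm (z - c)"
proof (rule field_differentiable_bound[of "closed_segment c z"])
  show "(poly p has_field_derivative poly (pderiv p) w) (at w within closed_segment c z)" for w
    by (rule has_field_derivative_at_within) (rule poly_DERIV)
  show "norm (poly (pderiv p) w) \<le> (4/3) ^ degree (pderiv p) * norm (poly (pderiv p) z)"
    if "w \<in> closed_segment c z" for w
    using assms that by (rule norm_poly_on_segment_le)
qed auto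

lemma norm_poly_diff_le:
  fixes h :: "complex poly"
  assumes "norm z \<le> r" "norm c \<le> r"
  shows "norm (poly h z - poly h c)
    \<le> (\<Sum>i\<le>degree (pderiv h). norm (coeff (pderiv h) i) * r ^ i) * norm (z - c)"
proof (rule field_differentiable_bound[of "cball 0 r"])
  show "(poly h has_field_derivative poly (pderiv h) w) (at w within cball 0 r)" for w
    by (rule has_field_derivative_at_within) (rule poly_DERIV)
  show "norm (poly (pderiv h) w) \<le> (\<Sum>i\<le>degree (pderiv h). norm (coeff (pderiv h) i) * r ^ i)"
    if "w \<in> cball 0 r" for w
    using that by (intro norm_poly_le) simp
qed (use assms in auto)

lemma critical_points_perturbation_bounded:
  assumes d: "d \<ge> 2" and p: "centered_monic d p" and h: "degree h < d - 1"
  obtains Z where "Z \<ge> 1"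
    "\<And>t z. 0 \<le> t \<Longrightarrow> t \<le> 1 \<Longrightarrow> poly (pderiv (p + smult (of_real t) h)) z = 0 \<Longrightarrow> norm z \<le> Z"
proof
  define A where "A = (\<Sum>i<d - 1. norm (coeff (pderiv p) i) + norm (coeff (pderiv h) i))"
  show "max 1 (A / real d) \<ge> 1" by simp
  fix t z
  assume t: "0 \<le> t" "t \<le> 1" and z: "poly (pderiv (p + smult (of_real t) h)) z = 0"
  define P where "P = pderiv (p + smult (of_real t) h)"
  have cm: "centered_monic d (p + smult (of_real t) h)"
    using p h degree_smult_le[of "of_real t" h] by (intro centered_monic_add) auto
  have deg: "degree P = d - 1" and lead: "lead_coeff P = of_nat d"
    using degree_pderiv_centered_monic[OF cm] lead_coeff_pderiv_centered_monic[OF cm] d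
    by (simp_all add: P_def)
  have "(\<Sum>i<d - 1. norm (coeff P i)) \<le> A"
    unfolding A_def
  proof (rule sum_mono)
    fix i
    have "norm (coeff P i) \<le> norm (coeff (pderiv p) i) + t * norm (coeff (pderiv h) i)"
      using norm_triangle_ineq[of "coeff (pderiv p) i" "of_real t * coeff (pderiv h) i"] t
      by (simp add: P_def pderiv_add pderiv_smult norm_mult)
    also have "\<dots> \<le> norm (coeff (pderiv p) i) + norm (coeff (pderiv h) i)"
      using t by (simp add: mult_left_le_one_le)
    finally show "norm (coeff P i) \<le> norm (coeff (pderiv p) i) + norm (coeff (pderiv h) i)" .
  qed
  moreover have "norm z \<le> max 1 ((\<Sum>i<degree P. norm (coeff P i)) / norm (lead_coeff P))"
    using d z deg by (intro root_norm_le_Cauchy_bound) (simp_all add: P_def)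
  ultimately show "norm z \<le> max 1 (A / real d)"
    using deg lead by (simp add: divide_right_mono order_trans[OF _ max.mono])
qed

definition inward_field :: "(complex \<Rightarrow> complex) \<Rightarrow> real \<Rightarrow> complex set \<Rightarrow> complex set \<Rightarrow> bool" where
  "inward_field W \<epsilon> K Y \<longleftrightarrow> \<epsilon> > 0 \<and>
     (\<forall>v\<in>K. \<forall>t y. 0 < t \<and> t < 1 \<and> norm (y - (v + of_real t * W v)) \<le> \<epsilon> * t \<longrightarrow> y \<in> Y)"

lemma norm_perturbed_critical_value_le:
  fixes p h :: "complex poly"
  assumes "pderiv p \<noteq> 0" and c: "poly (pderiv p) c = 0"
    and sep: "\<And>x. poly (pderiv p) x = 0 \<Longrightarrow> x \<noteq> c \<Longrightarrow> \<delta> \<le> norm (x - c)"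
    and near: "4 * norm (z - c) \<le> \<delta>"
    and z: "poly (pderiv (p + smult (of_real t) h)) z = 0" and t: "t \<ge> 0"
    and H: "norm (poly (pderiv h) z) \<le> H" "norm (poly h z - poly h c) \<le> H * norm (z - c)"
  shows "norm (poly (p + smult (of_real t) h) z - (poly p c + of_real t * poly h c))
    \<le> t * (((4/3) ^ degree (pderiv p) + 1) * H * norm (z - c))"
proof -
  have "poly (pderiv p) z = - (of_real t * poly (pderiv h) z)"
    using z by (simp add: pderiv_add pderiv_smult eq_neg_iff_add_eq_0)
  then have pz: "norm (poly (pderiv p) z) \<le> t * H"
    using t H(1) by (simp add: norm_mult mult_left_mono)
  have "norm (poly p z - poly p c)
      \<le> (4/3) ^ degree (pderiv p) * norm (poly (pderiv p) z) * norm (z - c)"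
    using assms(1) c sep near by (rule norm_poly_diff_le_near_critical_point)
  also have "\<dots> \<le> (4/3) ^ degree (pderiv p) * (t * H) * norm (z - c)"
    using pz by (intro mult_right_mono mult_left_mono) simp_all
  finally have p_diff: "norm (poly p z - poly p c) \<le> (4/3) ^ degree (pderiv p) * (t * H) * norm (z - c)" .
  have split: "poly (p + smult (of_real t) h) z - (poly p c + of_real t * poly h c)
      = (poly p z - poly p c) + of_real t * (poly h z - poly h c)"
    by (simp add: algebra_simps)
  have "norm (poly (p + smult (of_real t) h) z - (poly p c + of_real t * poly h c))
      \<le> norm (poly p z - poly p c) + t * norm (poly h z - poly h c)"
    unfolding split using t by (intro order_trans[OF norm_triangle_ineq]) (simp add: norm_mult)
  also have "\<dots> \<le> (4/3) ^ degree (pderiv p) * (t * H) * norm (z - c) + t * (H * norm (z - c))"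
    using p_diff H(2) t by (intro add_mono mult_left_mono) simp_all
  also have "\<dots> = t * (((4/3) ^ degree (pderiv p) + 1) * H * norm (z - c))"
    by (simp add: algebra_simps)
  finally show ?thesis .
qed

text \<open>A critical point \<open>z\<close> of \<open>p + t h\<close> lies at distance \<open>\<eta> = O(t ^ (1 / (d - 1)))\<close> from a
  critical point \<open>c\<close> of \<open>p\<close>, and the mean value estimate gives \<open>p z - p c = O(t \<eta>)\<close>; so the
  critical value \<open>p c\<close> moves to \<open>p c + t W (p c) + o(t)\<close>.\<close>

lemma perturb_critical_values:
  assumes d: "d \<ge> 2" and p: "centered_monic d p" "critical_values p \<subseteq> K"
    and W: "inward_field W \<epsilon> K Y" and h: "degree h < d - 1"
    and hW: "\<And>c. poly (pderiv p) c = 0 \<Longrightarrow> poly h c = W (poly p c)"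
  obtains T where "T > 0"
    "\<And>t. 0 < t \<Longrightarrow> t < T \<Longrightarrow> critical_values (p + smult (of_real t) h) \<subseteq> Y"
proof -
  have \<epsilon>: "\<epsilon> > 0" using W by (simp add: inward_field_def)
  have "d \<ge> 1" using d by simp
  obtain xs where xs: "length xs = d - 1" "set xs = {z. poly (pderiv p) z = 0}"
    "pderiv p = smult (of_nat d) (\<Prod>x\<leftarrow>xs. [:-x, 1:])"
    by (rule centered_monic_pderiv_decompose[OF p(1) \<open>d \<ge> 1\<close>])
  have pd0: "pderiv p \<noteq> 0" using xs(3) lead_coeff_prod_list_linear[of xs] d by auto
  have deg: "degree (pderiv p) = d - 1" and lead: "lead_coeff (pderiv p) = of_nat d"
    using degree_pderiv_centered_monic[OF p(1)] lead_coeff_pderiv_centered_monic[OF p(1)] d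
    by simp_all
  obtain \<delta> where \<delta>: "\<delta> > 0" "\<And>x y. x \<in> set xs \<Longrightarrow> y \<in> set xs \<Longrightarrow> x \<noteq> y \<Longrightarrow> \<delta> \<le> dist x y"
    using finite_separated[OF List.finite_set[of xs]] by blast
  have sep: "\<delta> \<le> norm (x - c)"
    if "poly (pderiv p) x = 0" "poly (pderiv p) c = 0" "x \<noteq> c" for x c
    using \<delta>(2)[of x c] that xs(2) by (simp add: dist_norm)
  obtain Z where Z: "Z \<ge> 1"
    "\<And>t z. 0 \<le> t \<Longrightarrow> t \<le> 1 \<Longrightarrow> poly (pderiv (p + smult (of_real t) h)) z = 0 \<Longrightarrow> norm z \<le> Z"
    using critical_points_perturbation_bounded[OF d p(1) h] by blast
  define H where "H = (\<Sum>i\<le>degree (pderiv h). norm (coeff (pderiv h) i) * Z ^ i)"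
  have H: "H \<ge> 0" using Z(1) by (simp add: H_def sum_nonneg)
  define \<kappa> where "\<kappa> = ((4/3) ^ (d - 1) + 1) * H"
  have \<kappa>: "\<kappa> \<ge> 0" using H by (simp add: \<kappa>_def)
  define \<eta>\<^sub>0 where "\<eta>\<^sub>0 = min (\<delta> / 4) (\<epsilon> / (\<kappa> + 1))"
  have \<eta>\<^sub>0: "\<eta>\<^sub>0 > 0" "4 * \<eta>\<^sub>0 \<le> \<delta>"
    using \<delta>(1) \<epsilon> \<kappa> by (simp_all add: \<eta>\<^sub>0_def)
  have "\<eta>\<^sub>0 \<le> \<epsilon> / (\<kappa> + 1)" by (simp add: \<eta>\<^sub>0_def)
  then have "\<eta>\<^sub>0 * (\<kappa> + 1) \<le> \<epsilon>" using \<kappa> by (simp add: pos_le_divide_eq)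
  then have \<kappa>\<eta>\<^sub>0: "\<kappa> * \<eta>\<^sub>0 \<le> \<epsilon>" using \<eta>\<^sub>0(1) by (simp add: algebra_simps)
  define T where "T = min 1 (real d * \<eta>\<^sub>0 ^ (d - 1) / (H + 1))"
  show ?thesis
  proof
    show "T > 0" using \<eta>\<^sub>0(1) H d by (simp add: T_def)
    fix t assume t: "0 < t" "t < T"
    show "critical_values (p + smult (of_real t) h) \<subseteq> Y"
      unfolding critical_values_subset_iff
    proof (intro allI impI)
      fix z assume z: "poly (pderiv (p + smult (of_real t) h)) z = 0"
      have "norm z \<le> Z" using Z(2)[OF _ _ z] t by (simp add: T_def)
      then have Hz: "norm (poly (pderiv h) z) \<le> H"
        unfolding H_def by (rule norm_poly_le)
      have "poly (pderiv p) z = - (of_real t * poly (pderiv h) z)"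
        using z by (simp add: pderiv_add pderiv_smult eq_neg_iff_add_eq_0)
      then have pz: "norm (poly (pderiv p) z) \<le> t * H"
        using t Hz by (simp add: norm_mult mult_left_mono)
      have "degree (pderiv p) \<ge> 1" using deg d by simp
      then obtain c where c: "poly (pderiv p) c = 0"
        and c_near: "norm (lead_coeff (pderiv p)) * norm (z - c) ^ degree (pderiv p) \<le> norm (poly (pderiv p) z)"
        by (rule exists_root_norm_power_le)
      define \<eta> where "\<eta> = norm (z - c)"
      have "real d * \<eta> ^ (d - 1) \<le> t * H"
        using c_near pz deg lead by (simp add: \<eta>_def)
      also have "\<dots> \<le> t * (H + 1)" using t by simp
      also have "\<dots> < real d * \<eta>\<^sub>0 ^ (d - 1)"
        using t H by (simp add: T_def pos_less_divide_eq)
      finally have "\<eta> < \<eta>\<^sub>0"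
        using \<eta>\<^sub>0(1) d by (simp add: power_less_imp_less_base)
      have "norm c \<le> Z" using Z(2)[of 0 c] c by simp
      have "norm (poly h z - poly h c) \<le> H * \<eta>"
        using norm_poly_diff_le[OF \<open>norm z \<le> Z\<close> \<open>norm c \<le> Z\<close>] by (simp add: H_def \<eta>_def)
      moreover have "4 * \<eta> \<le> \<delta>" using \<open>\<eta> < \<eta>\<^sub>0\<close> \<eta>\<^sub>0(2) by simp
      ultimately have "norm (poly (p + smult (of_real t) h) z - (poly p c + of_real t * poly h c))
          \<le> t * (((4/3) ^ degree (pderiv p) + 1) * H * \<eta>)"
        using pd0 c sep[OF _ c] z t Hz unfolding \<eta>_def by (intro norm_perturbed_critical_value_le) simp_all
      also have "\<dots> = t * (\<kappa> * \<eta>)" by (simp add: \<kappa>_def deg)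
      also have "\<dots> \<le> t * \<epsilon>"
        using \<kappa>\<eta>\<^sub>0 \<open>\<eta> < \<eta>\<^sub>0\<close> \<kappa> t
        by (intro mult_left_mono order_trans[OF mult_left_mono[of \<eta> \<eta>\<^sub>0 \<kappa>]]) simp_all
      finally show "poly (p + smult (of_real t) h) z \<in> Y"
        using W critical_valuesI[OF c] p(2) t hW[OF c] by (auto simp: inward_field_def T_def mult.commute)
    qed
  qed
qed

lemma coeff_in_closure_Poly_mt_perturb:
  assumes d: "d \<ge> 2" and p: "centered_monic d p" "critical_values p \<subseteq> K"
    and W: "inward_field W \<epsilon> K Y"
  shows "coeff p \<in> closure (Poly_mt d Y)"
proof -
  have "d \<ge> 1" using d by simp
  obtain xs where xs: "length xs = d - 1" "set xs = {z. poly (pderiv p) z = 0}"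
    by (rule centered_monic_pderiv_decompose[OF p(1) \<open>d \<ge> 1\<close>])
  obtain h where h: "degree h \<le> card (set xs) - 1" "\<And>c. c \<in> set xs \<Longrightarrow> poly h c = W (poly p c)"
    using exists_interpolating_poly[OF List.finite_set, of xs "\<lambda>c. W (poly p c)"] by blast
  have "degree h < d - 1"
    using h(1) card_length[of xs] xs(1) d by linarith
  then obtain T where T: "T > 0"
    "\<And>t. 0 < t \<Longrightarrow> t < T \<Longrightarrow> critical_values (p + smult (of_real t) h) \<subseteq> Y"
    using perturb_critical_values[OF d p W] h(2) xs(2) by blast
  define t where "t n = T * inverse (real (Suc (Suc n)))" for n
  have t: "0 < t n" "t n < T" for n
  proof -
    have "0 < inverse (real (Suc (Suc n)))" "inverse (real (Suc (Suc n))) < 1"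
      by (simp_all add: inverse_less_1_iff)
    then show "0 < t n" "t n < T"
      using T(1) mult_strict_left_mono[of _ 1 T] by (simp_all add: t_def)
  qed
  show ?thesis
  proof (rule coeff_in_closure_Poly_mt)
    show "centered_monic d (p + smult (of_real (t n)) h)" for n
      using p(1) \<open>degree h < d - 1\<close> degree_smult_le by (intro centered_monic_add) (auto intro: le_less_trans)
    show "critical_values (p + smult (of_real (t n)) h) \<subseteq> Y" for n
      using T(2) t by blast
    have "t \<longlonglongrightarrow> 0"
      unfolding t_def using LIMSEQ_Suc[OF LIMSEQ_inverse_real_of_nat] by (intro tendsto_mult_right_zero)
    then show "(\<lambda>n. coeff (p + smult (of_real (t n)) h) i) \<longlonglongrightarrow> coeff p i" for i
      by (auto intro!: tendsto_eq_intros)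
  qed
qed

lemma is_compactification_Poly_mtI:
  assumes "d \<ge> 2" "compact K" "Y \<subseteq> K"
    and "\<And>p. centered_monic d p \<Longrightarrow> critical_values p \<subseteq> K \<Longrightarrow> coeff p \<in> closure (Poly_mt d Y)"
  shows "is_compactification_of (Poly_mt d K) (Poly_mt d Y)"
  unfolding is_compactification_of_def
  using assms compact_Poly_mt Poly_mt_mono by (auto elim!: Poly_mtE)

section \<open>Rectangles, annuli and segments\<close>

lemma convex_shrink_into_interior:
  fixes S :: "complex set"
  assumes "convex S" "c \<in> interior S" "v \<in> S" "0 < l" "l < 1"
  shows "of_real (1 - l) * c + of_real l * v \<in> interior S"
proof -
  have "v - (1 - l) *\<^sub>R (v - c) \<in> interior S"
    using assms by (intro mem_interior_convex_shrink) auto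
  then show ?thesis by (simp add: scaleR_conv_of_real algebra_simps)
qed

lemma open_segment_shrink:
  fixes a b v :: complex
  assumes "a \<noteq> b" "v \<in> closed_segment a b" "0 < l" "l < 1"
  shows "of_real (1 - l) * ((a + b) / 2) + of_real l * v \<in> open_segment a b"
proof -
  obtain \<mu> where \<mu>: "0 \<le> \<mu>" "\<mu> \<le> 1" "v = (1 - \<mu>) *\<^sub>R a + \<mu> *\<^sub>R b"
    using assms(2) by (auto simp: in_segment)
  define \<nu> where "\<nu> = (1 - l) / 2 + l * \<mu>"
  have "0 \<le> l * \<mu>" "l * \<mu> \<le> l"
    using assms(3) \<mu>(1,2) mult_left_le[of \<mu> l] by simp_all
  then have "0 < \<nu>" "\<nu> < 1" unfolding \<nu>_def using assms(4) by argo+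
  moreover have "of_real (1 - l) * ((a + b) / 2) + of_real l * v = (1 - \<nu>) *\<^sub>R a + \<nu> *\<^sub>R b"
    by (simp add: \<mu>(3) \<nu>_def scaleR_conv_of_real field_simps)
  ultimately show ?thesis using assms(1) by (auto simp: in_segment)
qed

lemma closed_rectangleE:
  assumes "closed_rectangle S"
  obtains c where "compact S" "convex S" "c \<in> interior S"
proof -
  obtain w u a b where u: "norm u = 1" and ab: "0 < a" "0 < b"
    and S: "S = {w + u * (of_real x + \<i> * of_real y) | x y. 0 \<le> x \<and> x \<le> a \<and> 0 \<le> y \<and> y \<le> b}"
    using assms unfolding closed_rectangle_def by blast
  have lin: "linear ((*) u)" by (rule bounded_linear.linear[OF bounded_linear_mult_right])
  have "inj ((*) u)" using u by (auto intro: injI)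
  have S_image: "S = (+) w ` ((*) u ` cbox 0 (Complex a b))"
  proof (intro equalityI subsetI)
    fix s assume "s \<in> S"
    then obtain x y where "s = w + u * (of_real x + \<i> * of_real y)" "0 \<le> x" "x \<le> a" "0 \<le> y" "y \<le> b"
      unfolding S by blast
    then show "s \<in> (+) w ` ((*) u ` cbox 0 (Complex a b))"
      by (auto simp: image_image cbox_complex_eq Complex_eq[symmetric])
  next
    fix s assume "s \<in> (+) w ` ((*) u ` cbox 0 (Complex a b))"
    then obtain z where "s = w + u * z" "Re z \<in> {0..a}" "Im z \<in> {0..b}"
      by (auto simp: cbox_complex_eq)
    then show "s \<in> S" unfolding S using complex_eq[of z] by fastforce
  qed
  moreover have "compact (cbox 0 (Complex a b))" "convex (cbox 0 (Complex a b))"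
    by simp_all
  ultimately have "compact S" "convex S"
    using lin by (auto intro!: compact_continuous_image convex_translation convex_linear_image continuous_intros)
  moreover have "w + u * Complex (a / 2) (b / 2) \<in> interior S"
    unfolding S_image interior_translation interior_injective_linear_image[OF lin \<open>inj ((*) u)\<close>]
    using ab by (intro imageI) (simp add: in_box_complex_iff)
  ultimately show ?thesis using that by blast
qed

text \<open>The field pushes \<open>v\<close> radially towards the middle circle \<open>|z - z\<^sub>0| = (r + R) / 2\<close>;
  at time \<open>t\<close> the modulus of \<open>v + t W v - z\<^sub>0\<close> is the convex combination
  \<open>(1 - t) |v - z\<^sub>0| + t (r + R) / 2\<close>, at distance \<open>t (R - r) / 2\<close> from the boundary.\<close>

lemma closed_annulusE:
  assumes "closed_annulus A"
  obtains W \<epsilon> where "compact A" "inward_field W \<epsilon> A (interior A)"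
proof -
  obtain z\<^sub>0 r R where rR: "0 < r" "r < R" and A: "A = cball z\<^sub>0 R - ball z\<^sub>0 r"
    using assms unfolding closed_annulus_def by blast
  have "compact A" unfolding A by (intro compact_diff compact_cball open_ball)
  define U where "U = {y. r < norm (y - z\<^sub>0)} \<inter> {y. norm (y - z\<^sub>0) < R}"
  have "open U" unfolding U_def by (intro open_Int open_Collect_less continuous_intros)
  moreover have "U \<subseteq> A" unfolding U_def A by (auto simp: dist_norm norm_minus_commute)
  ultimately have U: "U \<subseteq> interior A" by (rule interior_maximal[rotated])
  define m where "m = (r + R) / 2"
  define W where "W v = (v - z\<^sub>0) * of_real ((m - norm (v - z\<^sub>0)) / norm (v - z\<^sub>0))" for v
  have "inward_field W ((R - r) / 4) A (interior A)"
    unfolding inward_field_def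
  proof (intro conjI ballI allI impI)
    show "(R - r) / 4 > 0" using rR by simp
    fix v t y assume v: "v \<in> A" and ty: "0 < t \<and> t < 1 \<and> norm (y - (v + of_real t * W v)) \<le> (R - r) / 4 * t"
    define \<rho> where "\<rho> = norm (v - z\<^sub>0)"
    have \<rho>: "r \<le> \<rho>" "\<rho> \<le> R" using v unfolding A \<rho>_def by (auto simp: dist_norm norm_minus_commute)
    define \<rho>' where "\<rho>' = (1 - t) * \<rho> + t * m"
    have "\<rho>' > 0" using ty \<rho> rR by (simp add: \<rho>'_def m_def add_pos_nonneg)
    have "v + of_real t * W v - z\<^sub>0 = (v - z\<^sub>0) * of_real (\<rho>' / \<rho>)"
      using \<rho> rR by (simp add: W_def \<rho>'_def \<rho>_def[symmetric] field_simps)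
    moreover have "\<rho> > 0" using \<rho> rR by simp
    ultimately have "norm (v + of_real t * W v - z\<^sub>0) = \<rho>'"
      using \<open>\<rho>' > 0\<close> by (simp add: norm_mult norm_divide \<rho>_def[symmetric])
    then have "\<bar>norm (y - z\<^sub>0) - \<rho>'\<bar> \<le> (R - r) / 4 * t"
      using ty norm_triangle_ineq3[of "y - z\<^sub>0" "v + of_real t * W v - z\<^sub>0"] by (simp add: algebra_simps)
    moreover have "(1 - t) * r \<le> (1 - t) * \<rho>" "(1 - t) * \<rho> \<le> (1 - t) * R"
      using ty \<rho> by (simp_all add: mult_left_mono)
    moreover have "t * r < t * R" using ty rR by simp
    ultimately have "r < norm (y - z\<^sub>0)" "norm (y - z\<^sub>0) < R"
      unfolding \<rho>'_def m_def abs_le_iff by argo+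
    then show "y \<in> interior A" using U by (auto simp: U_def)
  qed
  with \<open>compact A\<close> show ?thesis using that by blast
qed

theorem theoremF:
  fixes d :: nat and Qc Ac :: "complex set" and a b :: complex
  assumes "d \<ge> 2"
    and "closed_rectangle Qc" and "closed_annulus Ac" and "a \<noteq> b"
  shows "is_compactification_of (Poly_mt d Qc) (Poly_mt d (interior Qc))
       \<and> is_compactification_of (Poly_mt d Ac) (Poly_mt d (interior Ac))
       \<and> is_compactification_of (Poly_mt d (closed_segment a b)) (Poly_mt d (open_segment a b))"
proof (intro conjI)
  obtain c where Q: "compact Qc" "convex Qc" "c \<in> interior Qc"
    using closed_rectangleE[OF assms(2)] by blast
  show "is_compactification_of (Poly_mt d Qc) (Poly_mt d (interior Qc))"
  proof (rule is_compactification_Poly_mtI[OF assms(1) Q(1) interior_subset])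
    fix p assume "centered_monic d p" "critical_values p \<subseteq> Qc"
    then show "coeff p \<in> closure (Poly_mt d (interior Qc))"
      using convex_shrink_into_interior[OF Q(2,3)] by (rule coeff_in_closure_Poly_mt_contract[OF assms(1)])
  qed
  obtain W \<epsilon> where A: "compact Ac" "inward_field W \<epsilon> Ac (interior Ac)"
    using closed_annulusE[OF assms(3)] by blast
  show "is_compactification_of (Poly_mt d Ac) (Poly_mt d (interior Ac))"
  proof (rule is_compactification_Poly_mtI[OF assms(1) A(1) interior_subset])
    fix p assume "centered_monic d p" "critical_values p \<subseteq> Ac"
    then show "coeff p \<in> closure (Poly_mt d (interior Ac))"
      using A(2) by (rule coeff_in_closure_Poly_mt_perturb[OF assms(1)])
  qed
  show "is_compactification_of (Poly_mt d (closed_segment a b)) (Poly_mt d (open_segment a b))"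
  proof (rule is_compactification_Poly_mtI[OF assms(1) compact_segment segment_open_subset_closed])
    fix p assume "centered_monic d p" "critical_values p \<subseteq> closed_segment a b"
    then show "coeff p \<in> closure (Poly_mt d (open_segment a b))"
      using open_segment_shrink[OF assms(4)] by (rule coeff_in_closure_Poly_mt_contract[OF assms(1)])
  qed
qed

end
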